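(* Let $N,k\in\mathbb N$, $\delta\in[0,\tfrac12)$, $\mathcal Q\subseteq\mathcal S(N)$ a set of $N$-dimensional quantum states and $\mathcal Z:\mathcal Q\to\mathcal P(\mathcal T)$ a learning problem. Let $\mathcal Z(\mathcal Q)=\{\mathcal Z(\rho):\rho\in\mathcal Q\}$ and assume that any two distinct sets $\mathcal T_i\ne\mathcal T_j$ in $\mathcal Z(\mathcal Q)$ satisfy $\mathcal T_i\cap\mathcal T_j=\varnothing$. If there is a quantum algorithm that, with probability $1-\delta$, learns $\mathcal Z$ from $k$ copies of the unknown state, then for every $\tau<\tfrac12-\delta$ there exists a statistical algorithm that learns $\mathcal Z$ from $q=\lceil\log|\mathcal Z(\mathcal Q)|\rceil$ queries to $\mathtt{QStat}^{(k)}_\tau$. In particular, setting $\tau=\tfrac1{10}$, if learning $\mathcal Z$ requires at least $q>\lceil\log|\mathcal Z(\mathcal Q)|\rceil$ queries to $\mathtt{QStat}^{(k)}_\tau$, then $\mathcal Z$ cannot be solved with probability $1-\delta\ge\tfrac23$ given $k$ copies from entangled measurements.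
   Context: $\mathcal S(N)$ is the set of $N$-dimensional density matrices. The learning problem: given access to unknown $\rho\in\mathcal Q$, output some $t\in\mathcal Z(\rho)$. A quantum algorithm learning from $k$ copies performs a (possibly entangled) measurement on $\rho^{\otimes k}$ and outputs an element of $\mathcal Z(\rho)$ with probability at least $1-\delta$. The $k$-copy quantum statistical query oracle $\mathtt{QStat}^{(k)}_\tau(\rho)$, queried with a Hermitian $O$ on $(\mathbb C^N)^{\otimes k}$ with $\|O\|_{\mathrm{op}}\le1$, returns some $v$ with $|v-\mathrm{tr}[\rho^{\otimes k}O]|\le\tau$. $\log$ is base 2. *)

theory Defs
  imports Complex_Main
begin

text \<open>Matrices on C^N are functions nat => nat => complex (entries outside
  {0..<N} are irrelevant / zero). Operators on the k-fold tensor power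
  (C^N)^{\<otimes>k} are indexed by lists of length k with entries < N.\<close>

type_synonym cmat = "nat \<Rightarrow> nat \<Rightarrow> complex"
type_synonym kop = "nat list \<Rightarrow> nat list \<Rightarrow> complex"

definition tidx :: "nat \<Rightarrow> nat \<Rightarrow> nat list set" where
  "tidx N k = {xs. length xs = k \<and> set xs \<subseteq> {..<N}}"

definition hermitian_on :: "'i set \<Rightarrow> ('i \<Rightarrow> 'i \<Rightarrow> complex) \<Rightarrow> bool" where
  "hermitian_on I A \<longleftrightarrow> (\<forall>i\<in>I. \<forall>j\<in>I. A i j = cnj (A j i))"

definition psd_on :: "'i set \<Rightarrow> ('i \<Rightarrow> 'i \<Rightarrow> complex) \<Rightarrow> bool" where
  "psd_on I A \<longleftrightarrow> hermitian_on I A \<and>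
     (\<forall>v :: 'i \<Rightarrow> complex. 0 \<le> Re (\<Sum>i\<in>I. \<Sum>j\<in>I. cnj (v i) * A i j * v j))"

definition opnorm_le1_on :: "'i set \<Rightarrow> ('i \<Rightarrow> 'i \<Rightarrow> complex) \<Rightarrow> bool" where
  "opnorm_le1_on I A \<longleftrightarrow> (\<forall>v :: 'i \<Rightarrow> complex.
     (\<Sum>i\<in>I. (cmod (\<Sum>j\<in>I. A i j * v j))\<^sup>2) \<le> (\<Sum>i\<in>I. (cmod (v i))\<^sup>2))"

definition density_states :: "nat \<Rightarrow> cmat set" where
  "density_states N = {\<rho>. psd_on {..<N} \<rho> \<and> (\<Sum>i<N. \<rho> i i) = 1 \<and>
      (\<forall>i j. N \<le> i \<or> N \<le> j \<longrightarrow> \<rho> i j = 0)}"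

definition tensor_pow :: "cmat \<Rightarrow> nat \<Rightarrow> kop" where
  "tensor_pow \<rho> k = (\<lambda>xs ys. \<Prod>l<k. \<rho> (xs ! l) (ys ! l))"

definition qtrace :: "nat \<Rightarrow> nat \<Rightarrow> cmat \<Rightarrow> kop \<Rightarrow> complex" where
  "qtrace N k \<rho> Ob = (\<Sum>xs\<in>tidx N k. \<Sum>ys\<in>tidx N k. tensor_pow \<rho> k xs ys * Ob ys xs)"

definition qstat_obs :: "nat \<Rightarrow> nat \<Rightarrow> kop \<Rightarrow> bool" where
  "qstat_obs N k Ob \<longleftrightarrow> hermitian_on (tidx N k) Ob \<and> opnorm_le1_on (tidx N k) Ob"

text \<open>A quantum algorithm learning Z from k copies with success probability
  at least 1 - delta: a (finite-outcome) POVM {M_t} on (C^N)^{\<otimes>k}, whose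
  outcome t is output.\<close>
definition quantum_learns ::
  "nat \<Rightarrow> nat \<Rightarrow> real \<Rightarrow> cmat set \<Rightarrow> (cmat \<Rightarrow> 't set) \<Rightarrow> bool" where
  "quantum_learns N k \<delta> Q Z \<longleftrightarrow>
     (\<exists>(S :: 't set) (M :: 't \<Rightarrow> kop).
        finite S \<and> (\<forall>t\<in>S. psd_on (tidx N k) (M t)) \<and>
        (\<forall>xs\<in>tidx N k. \<forall>ys\<in>tidx N k. (\<Sum>t\<in>S. M t xs ys) = (if xs = ys then 1 else 0)) \<and>
        (\<forall>\<rho>\<in>Q. (\<Sum>t\<in>S \<inter> Z \<rho>. Re (qtrace N k \<rho> (M t))) \<ge> 1 - \<delta>))"

text \<open>Deterministic adaptive statistical algorithms: either output a value,
  or ask a query Ob and continue depending on the answer.\<close>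
datatype 't sq_alg = Output 't | Ask kop "real \<Rightarrow> 't sq_alg"

primrec sq_ok :: "nat \<Rightarrow> nat \<Rightarrow> real \<Rightarrow> cmat \<Rightarrow> 't set \<Rightarrow> 't sq_alg \<Rightarrow> nat \<Rightarrow> bool" where
  "sq_ok N k \<tau> \<rho> T (Output t) n = (t \<in> T)"
| "sq_ok N k \<tau> \<rho> T (Ask Ob f) n = (0 < n \<and> qstat_obs N k Ob \<and>
     (\<forall>v::real. cmod (complex_of_real v - qtrace N k \<rho> Ob) \<le> \<tau> \<longrightarrow>
        sq_ok N k \<tau> \<rho> T (f v) (n - 1)))"

definition sq_learns ::
  "nat \<Rightarrow> nat \<Rightarrow> real \<Rightarrow> cmat set \<Rightarrow> (cmat \<Rightarrow> 't set) \<Rightarrow> nat \<Rightarrow> bool" where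
  "sq_learns N k \<tau> Q Z q \<longleftrightarrow> (\<exists>A :: 't sq_alg. \<forall>\<rho>\<in>Q. sq_ok N k \<tau> \<rho> (Z \<rho>) A q)"

end

(*
  Let M be the POVM of the quantum learner.  As the sets Z(rho) are pairwise disjoint, an
  outcome lying in some Z(rho) determines that set; number these sets by indices below
  |Z(Q)| <= 2^q.  For each bit position j, the sum O_j of the M_t over the outcomes t whose
  set has bit j of its index set satisfies 0 <= O_j <= 1, and tr(rho^k O_j), with rho^k the
  k-fold tensor power, is at least 1 - delta if bit j of the index of Z(rho) is set and at
  most delta otherwise.  An answer within tau < 1/2 - delta thus reveals the bit by
  comparison with 1/2, and q queries recover the index, hence an element of Z(rho).
  Nonnegativity of tr(rho^k M) for positive semidefinite M comes from a Gram factorisation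
  rho = G G*, which makes rho^k a sum of rank-one product terms.
*)
theory Submission
  imports Defs
begin

definition sesq :: "'i set \<Rightarrow> ('i \<Rightarrow> 'i \<Rightarrow> complex) \<Rightarrow> ('i \<Rightarrow> complex) \<Rightarrow> ('i \<Rightarrow> complex) \<Rightarrow> complex" where
  "sesq I A u v = (\<Sum>i\<in>I. \<Sum>j\<in>I. cnj (u i) * A i j * v j)"

lemma psd_on_iff_sesq: "psd_on I A \<longleftrightarrow> hermitian_on I A \<and> (\<forall>v. 0 \<le> Re (sesq I A v v))"
  unfolding psd_on_def sesq_def ..

lemma psd_sesq_nonneg: "psd_on I A \<Longrightarrow> 0 \<le> Re (sesq I A v v)"
  by (simp add: psd_on_iff_sesq)

lemma psd_hermitian: "psd_on I A \<Longrightarrow> hermitian_on I A"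
  by (simp add: psd_on_iff_sesq)

lemma cnj_sesq:
  assumes "hermitian_on I A"
  shows "cnj (sesq I A u v) = sesq I A v u"
proof -
  have "cnj (sesq I A u v) = (\<Sum>i\<in>I. \<Sum>j\<in>I. u i * cnj (A i j) * cnj (v j))"
    unfolding sesq_def by (simp add: cnj_sum)
  also have "\<dots> = (\<Sum>i\<in>I. \<Sum>j\<in>I. u i * A j i * cnj (v j))"
    using assms unfolding hermitian_on_def by (intro sum.cong refl) (metis complex_cnj_cnj)
  also have "\<dots> = sesq I A v u"
    unfolding sesq_def by (subst sum.swap) (simp add: mult_ac)
  finally show ?thesis .
qed

lemma sesq_diag_real:
  assumes "hermitian_on I A"
  shows "sesq I A u u = complex_of_real (Re (sesq I A u u))"
  using cnj_sesq[OF assms, of u u] by (metis Reals_cnj_iff complex_is_Real_iff of_real_Re)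

lemma sesq_add_smult:
  "sesq I A (\<lambda>i. u i + \<alpha> * v i) (\<lambda>i. u i + \<alpha> * v i) =
    sesq I A u u + \<alpha> * sesq I A u v + cnj \<alpha> * sesq I A v u + cnj \<alpha> * \<alpha> * sesq I A v v"
  unfolding sesq_def by (simp add: algebra_simps sum.distrib sum_distrib_left)

lemma sesq_diff: "sesq I (\<lambda>i j. A i j - B i j) u v = sesq I A u v - sesq I B u v"
  unfolding sesq_def by (simp add: algebra_simps sum_subtractf)

lemma sesq_sum: "sesq I (\<lambda>i j. \<Sum>t\<in>S. M t i j) u v = (\<Sum>t\<in>S. sesq I (M t) u v)"
  unfolding sesq_def by (simp add: sum_distrib_left sum_distrib_right sum.swap[of _ S])

lemma sesq_id:
  assumes "finite I"
  shows "sesq I (\<lambda>i j. if i = j then 1 else 0) u u = of_real (\<Sum>i\<in>I. (cmod (u i))\<^sup>2)"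
proof -
  have "sesq I (\<lambda>i j. if i = j then 1 else 0) u u = (\<Sum>i\<in>I. cnj (u i) * u i)"
    unfolding sesq_def using assms by (simp add: if_distrib if_distribR cong: if_cong)
  also have "\<dots> = (\<Sum>i\<in>I. of_real ((cmod (u i))\<^sup>2))"
    by (intro sum.cong refl) (metis complex_norm_square mult.commute of_real_power)
  finally show ?thesis by simp
qed

lemma sesq_indicator_right:
  assumes "finite I" "y \<in> I"
  shows "sesq I A v (\<lambda>i. if i = y then 1 else 0) = (\<Sum>i\<in>I. cnj (v i) * A i y)"
proof -
  have "(\<Sum>j\<in>I. cnj (v i) * A i j * (if j = y then 1 else 0)) = cnj (v i) * A i y" for i
    using assms by (simp add: if_distrib cong: if_cong)
  then show ?thesis unfolding sesq_def by simp
qed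

lemma sesq_indicator:
  assumes "finite I" "x \<in> I" "y \<in> I"
  shows "sesq I A (\<lambda>i. if i = x then 1 else 0) (\<lambda>i. if i = y then 1 else 0) = A x y"
proof -
  have "(\<Sum>i\<in>I. cnj (if i = x then 1 else 0) * A i y) = (\<Sum>i\<in>I. if i = x then A i y else 0)"
    by (intro sum.cong) auto
  also have "\<dots> = A x y"
    using assms by simp
  finally have "(\<Sum>i\<in>I. cnj (if i = x then 1 else 0) * A i y) = A x y" .
  then show ?thesis using assms by (simp add: sesq_indicator_right)
qed

lemma nonneg_quadratic_imp_le:
  fixes a b x :: real
  assumes x: "0 \<le> x" and b: "0 \<le> b" and nonneg: "\<And>s. 0 \<le> a - 2 * s * x + s\<^sup>2 * x * b"
  shows "x \<le> a * b"
proof (cases "b = 0")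
  case True
  have "x = 0"
  proof (rule ccontr)
    assume "x \<noteq> 0"
    with x have "0 \<le> a - 2 * ((\<bar>a\<bar> + 1) / (2 * x)) * x"
      using nonneg[of "(\<bar>a\<bar> + 1) / (2 * x)"] True by simp
    also have "\<dots> = a - (\<bar>a\<bar> + 1)" using \<open>x \<noteq> 0\<close> by (simp add: field_simps)
    finally show False by linarith
  qed
  then show ?thesis using True by simp
next
  case False
  with b have "0 < b" by simp
  have "0 \<le> a - 2 * (1 / b) * x + (1 / b)\<^sup>2 * x * b" by (rule nonneg)
  also have "\<dots> = a - x / b" using \<open>0 < b\<close> by (simp add: field_simps power2_eq_square)
  finally show ?thesis using \<open>0 < b\<close> by (simp add: field_simps)
qed

lemma psd_cauchy_schwarz:
  assumes "psd_on I A"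
  shows "(cmod (sesq I A u v))\<^sup>2 \<le> Re (sesq I A u u) * Re (sesq I A v v)"
proof -
  have H: "hermitian_on I A" using assms by (rule psd_hermitian)
  define a b c where "a = Re (sesq I A u u)" and "b = Re (sesq I A v v)" and "c = sesq I A u v"
  have "0 \<le> a - 2 * s * (cmod c)\<^sup>2 + s\<^sup>2 * (cmod c)\<^sup>2 * b" for s :: real
  proof -
    define \<alpha> where "\<alpha> = - of_real s * cnj c"
    have "0 \<le> Re (sesq I A (\<lambda>i. u i + \<alpha> * v i) (\<lambda>i. u i + \<alpha> * v i))"
      using assms by (rule psd_sesq_nonneg)
    also have "\<dots> = Re (of_real a + \<alpha> * c + cnj \<alpha> * cnj c + cnj \<alpha> * \<alpha> * of_real b)"
      unfolding sesq_add_smult a_def b_def c_def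
      by (simp flip: sesq_diag_real[OF H] add: cnj_sesq[OF H])
    also have "\<dots> = a - 2 * s * (cmod c)\<^sup>2 + s\<^sup>2 * (cmod c)\<^sup>2 * b"
      unfolding \<alpha>_def cmod_power2 by (simp add: power2_eq_square algebra_simps)
    finally show ?thesis .
  qed
  moreover have "0 \<le> b" unfolding b_def using assms by (rule psd_sesq_nonneg)
  ultimately show ?thesis unfolding c_def a_def b_def
    by (intro nonneg_quadratic_imp_le) simp_all
qed

lemma psd_on_cong:
  assumes "\<And>x y. x \<in> I \<Longrightarrow> y \<in> I \<Longrightarrow> A x y = B x y"
  shows "psd_on I A \<longleftrightarrow> psd_on I B"
proof -
  have "hermitian_on I A \<longleftrightarrow> hermitian_on I B"
    unfolding hermitian_on_def using assms by (intro ball_cong refl) simp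
  moreover have "sesq I A v v = sesq I B v v" for v
    unfolding sesq_def using assms by (intro sum.cong refl) simp
  ultimately show ?thesis unfolding psd_on_iff_sesq by simp
qed

lemma psd_on_subset:
  assumes "finite I" "psd_on I A" "J \<subseteq> I"
  shows "psd_on J A"
  unfolding psd_on_iff_sesq
proof (intro conjI allI)
  show "hermitian_on J A"
    using psd_hermitian[OF assms(2)] assms(3) unfolding hermitian_on_def by blast
  fix v
  define w :: "_ \<Rightarrow> complex" where "w i = (if i \<in> J then v i else 0)" for i
  have "sesq J A v v = sesq J A w w"
    unfolding sesq_def w_def by simp
  also have "\<dots> = sesq I A w w"
    unfolding sesq_def using assms
    by (intro sum.mono_neutral_cong_left) (auto simp: w_def intro!: sum.neutral)
  finally show "0 \<le> Re (sesq J A v v)"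
    using assms(2) by (simp add: psd_sesq_nonneg)
qed

lemma psd_zero_diag:
  assumes "finite I" "psd_on I A" "x \<in> I" "A x x = 0" "i \<in> I"
  shows "A i x = 0" "A x i = 0"
proof -
  let ?e = "\<lambda>y i. if i = y then 1 else 0 :: complex"
  have "(cmod (sesq I A (?e i) (?e x)))\<^sup>2 \<le> Re (sesq I A (?e i) (?e i)) * Re (sesq I A (?e x) (?e x))"
    using assms(2) by (rule psd_cauchy_schwarz)
  with assms show "A i x = 0" by (simp add: sesq_indicator)
  moreover have "A x i = cnj (A i x)"
    using psd_hermitian[OF assms(2)] assms(3,5) unfolding hermitian_on_def by blast
  ultimately show "A x i = 0" by simp
qed

lemma psd_sum:
  assumes "\<And>t. t \<in> S \<Longrightarrow> psd_on I (M t)"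
  shows "psd_on I (\<lambda>x y. \<Sum>t\<in>S. M t x y)"
  unfolding psd_on_iff_sesq
proof (intro conjI allI)
  show "hermitian_on I (\<lambda>x y. \<Sum>t\<in>S. M t x y)"
    unfolding hermitian_on_def
  proof (intro ballI)
    fix x y assume "x \<in> I" "y \<in> I"
    then have "M t x y = cnj (M t y x)" if "t \<in> S" for t
      using psd_hermitian[OF assms[OF that]] unfolding hermitian_on_def by blast
    then show "(\<Sum>t\<in>S. M t x y) = cnj (\<Sum>t\<in>S. M t y x)"
      unfolding cnj_sum by (rule sum.cong[OF refl])
  qed
  show "0 \<le> Re (sesq I (\<lambda>x y. \<Sum>t\<in>S. M t x y) v v)" for v
    unfolding sesq_sum Re_sum by (intro sum_nonneg psd_sesq_nonneg assms)
qed

lemma opnorm_le1_if_psd_below_id: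
  assumes fin: "finite I" and P: "psd_on I P"
    and id_minus_P: "psd_on I (\<lambda>i j. (if i = j then 1 else 0) - P i j)"
  shows "opnorm_le1_on I P"
  unfolding opnorm_le1_on_def
proof
  fix v :: "_ \<Rightarrow> complex"
  define w where "w i = (\<Sum>j\<in>I. P i j * v j)" for i
  define nw nv where "nw = (\<Sum>i\<in>I. (cmod (w i))\<^sup>2)" and "nv = (\<Sum>i\<in>I. (cmod (v i))\<^sup>2)"
  have "0 \<le> nw" "0 \<le> nv" unfolding nw_def nv_def by (simp_all add: sum_nonneg)
  have below_id: "Re (sesq I P u u) \<le> (\<Sum>i\<in>I. (cmod (u i))\<^sup>2)" for u
    using psd_sesq_nonneg[OF id_minus_P, of u] by (simp add: sesq_diff sesq_id[OF fin])
  have "sesq I P w v = (\<Sum>i\<in>I. cnj (w i) * w i)"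
    unfolding sesq_def w_def by (simp add: sum_distrib_left mult.assoc)
  also have "\<dots> = of_real nw" unfolding nw_def of_real_sum
    by (intro sum.cong refl) (metis complex_norm_square mult.commute of_real_power)
  finally have "nw\<^sup>2 = (cmod (sesq I P w v))\<^sup>2" using \<open>0 \<le> nw\<close> by simp
  also have "\<dots> \<le> Re (sesq I P w w) * Re (sesq I P v v)"
    using P by (rule psd_cauchy_schwarz)
  also have "\<dots> \<le> nw * nv"
    using below_id[of w] below_id[of v] psd_sesq_nonneg[OF P, of w] psd_sesq_nonneg[OF P, of v]
    unfolding nw_def nv_def by (simp add: mult_mono)
  finally have "nw * nw \<le> nw * nv" by (simp add: power2_eq_square)
  then have "nw \<le> nv" using \<open>0 \<le> nw\<close> \<open>0 \<le> nv\<close>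
    by (cases "nw = 0") (auto simp: mult_le_cancel_left)
  then show "(\<Sum>i\<in>I. (cmod (\<Sum>j\<in>I. P i j * v j))\<^sup>2) \<le> (\<Sum>i\<in>I. (cmod (v i))\<^sup>2)"
    unfolding nw_def nv_def w_def .
qed

lemma psd_diag:
  assumes "finite I" "psd_on I A" "x \<in> I"
  shows "A x x = of_real (Re (A x x))" "0 \<le> Re (A x x)"
proof -
  let ?e = "\<lambda>i. if i = x then 1 else 0 :: complex"
  show "A x x = of_real (Re (A x x))"
    using sesq_diag_real[OF psd_hermitian[OF assms(2)], of ?e] assms by (simp add: sesq_indicator)
  show "0 \<le> Re (A x x)"
    using psd_sesq_nonneg[OF assms(2), of ?e] assms by (simp add: sesq_indicator)
qed

text \<open>A zero pivot A x x is harmless here and in the next lemma, since division by zero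
  yields 0.\<close>
lemma psd_schur_complement:
  assumes fin: "finite I" and A: "psd_on I A" and x: "x \<in> I"
  shows "psd_on I (\<lambda>i j. A i j - A i x * A x j / A x x)"
  unfolding psd_on_iff_sesq
proof (intro conjI allI)
  define a where "a = Re (A x x)"
  have Axx: "A x x = of_real a" and "0 \<le> a"
    using psd_diag[OF fin A x] unfolding a_def by simp_all
  have cnj_A: "cnj (A j i) = A i j" if "i \<in> I" "j \<in> I" for i j
    using psd_hermitian[OF A] that unfolding hermitian_on_def by (metis complex_cnj_cnj)
  show "hermitian_on I (\<lambda>i j. A i j - A i x * A x j / A x x)"
    unfolding hermitian_on_def Axx
    by (simp add: cnj_A x mult.commute)
  fix v
  define c where "c = (\<Sum>i\<in>I. cnj (v i) * A i x)"
  have row: "(\<Sum>j\<in>I. A x j * v j) = cnj c"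
    unfolding c_def cnj_sum by (simp add: cnj_A x mult.commute)
  have "sesq I (\<lambda>i j. A i j - A i x * A x j / A x x) v v
      = sesq I A v v - (\<Sum>i\<in>I. \<Sum>j\<in>I. cnj (v i) * A i x * (A x j * v j)) / of_real a"
    unfolding sesq_def Axx by (simp add: sum_divide_distrib sum_subtractf algebra_simps)
  also have "\<dots> = sesq I A v v - c * cnj c / of_real a"
    unfolding row[symmetric] unfolding c_def by (simp only: sum_product)
  also have "\<dots> = sesq I A v v - of_real ((cmod c)\<^sup>2 / a)"
    by (simp add: complex_norm_square[symmetric])
  finally have schur: "Re (sesq I (\<lambda>i j. A i j - A i x * A x j / A x x) v v) = Re (sesq I A v v) - (cmod c)\<^sup>2 / a"
    by simp
  have "(cmod c)\<^sup>2 \<le> Re (sesq I A v v) * a"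
    using psd_cauchy_schwarz[OF A, of v "\<lambda>i. if i = x then 1 else 0"] fin x
    by (simp add: sesq_indicator sesq_indicator_right c_def a_def)
  then have "(cmod c)\<^sup>2 / a \<le> Re (sesq I A v v)"
    using \<open>0 \<le> a\<close> psd_sesq_nonneg[OF A, of v]
    by (cases "a = 0") (simp_all add: divide_le_eq)
  then show "0 \<le> Re (sesq I (\<lambda>i j. A i j - A i x * A x j / A x x) v v)"
    unfolding schur by simp
qed

lemma psd_pivot_rank_one:
  assumes fin: "finite I" and A: "psd_on I A" and x: "x \<in> I"
  obtains u where "\<And>i j. j \<in> I \<Longrightarrow> A i x * A x j / A x x = u i * cnj (u j)"
proof
  define a where "a = Re (A x x)"
  have Axx: "A x x = of_real a" and "0 \<le> a"
    using psd_diag[OF fin A x] unfolding a_def by simp_all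
  fix i j assume "j \<in> I"
  then have "A x j = cnj (A j x)"
    using psd_hermitian[OF A] x unfolding hermitian_on_def by blast
  then show "A i x * A x j / A x x = A i x / of_real (sqrt a) * cnj (A j x / of_real (sqrt a))"
    unfolding Axx using \<open>0 \<le> a\<close> by (simp flip: of_real_mult)
qed

lemma psd_gram_factorization:
  assumes "finite I" "psd_on I A"
  shows "\<exists>G. \<forall>i\<in>I. \<forall>j\<in>I. A i j = (\<Sum>m\<in>I. G i m * cnj (G j m))"
  using assms
proof (induction I arbitrary: A rule: finite_induct)
  case empty
  then show ?case by simp
next
  case (insert x F)
  have fin: "finite (insert x F)"
    using insert.hyps(1) by simp
  define B where "B i j = A i j - A i x * A x j / A x x" for i j
  have psdB: "psd_on (insert x F) B"
    unfolding B_def using fin insert.prems insertI1 by (rule psd_schur_complement)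
  have Bx: "B i x = 0" "B x i = 0" if "i \<in> insert x F" for i
    using psd_zero_diag[OF fin psdB insertI1 _ that] unfolding B_def by simp_all
  obtain u where u: "\<And>i j. j \<in> insert x F \<Longrightarrow> A i x * A x j / A x x = u i * cnj (u j)"
    using psd_pivot_rank_one[OF fin insert.prems insertI1] by blast
  obtain G where G: "\<forall>i\<in>F. \<forall>j\<in>F. B i j = (\<Sum>m\<in>F. G i m * cnj (G j m))"
    using insert.IH psd_on_subset[OF fin psdB] by blast
  define G' where "G' i m = (if m = x then u i else if i \<in> F then G i m else 0)" for i m
  have "A i j = (\<Sum>m\<in>insert x F. G' i m * cnj (G' j m))" if "i \<in> insert x F" "j \<in> insert x F" for i j
  proof -
    have "(\<Sum>m\<in>insert x F. G' i m * cnj (G' j m))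
        = u i * cnj (u j) + (\<Sum>m\<in>F. (if i \<in> F then G i m else 0) * cnj (if j \<in> F then G j m else 0))"
      using insert.hyps unfolding G'_def by (auto intro!: sum.cong)
    also have "\<dots> = u i * cnj (u j) + B i j"
      using G Bx that insert.hyps(2) by auto
    finally show ?thesis unfolding B_def using u[OF that(2)] by simp
  qed
  then show ?case by blast
qed

lemma tidx_0: "tidx N 0 = {[]}"
  unfolding tidx_def by auto

lemma tidx_Suc: "tidx N (Suc k) = (\<lambda>(m, ms). m # ms) ` ({..<N} \<times> tidx N k)"
  unfolding tidx_def by (force simp: length_Suc_conv)

lemma finite_tidx: "finite (tidx N k)"
  by (induction k) (simp_all add: tidx_0 tidx_Suc)

lemma tidx_nth_less: "xs \<in> tidx N k \<Longrightarrow> l < k \<Longrightarrow> xs ! l < N"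
  unfolding tidx_def using nth_mem by fastforce

lemma prod_sum_eq_sum_tidx:
  fixes f :: "nat \<Rightarrow> nat \<Rightarrow> 'a::comm_semiring_1"
  shows "(\<Prod>l<k. \<Sum>m<N. f l m) = (\<Sum>ms\<in>tidx N k. \<Prod>l<k. f l (ms ! l))"
proof (induction k arbitrary: f)
  case 0
  then show ?case by (simp add: tidx_0)
next
  case (Suc k)
  have inj: "inj_on (\<lambda>(m, ms). m # ms) ({..<N} \<times> tidx N k)"
    by (auto simp: inj_on_def)
  have "(\<Sum>ms\<in>tidx N (Suc k). \<Prod>l<Suc k. f l (ms ! l))
      = (\<Sum>(m, ms)\<in>{..<N} \<times> tidx N k. \<Prod>l<Suc k. f l ((m # ms) ! l))"
    unfolding tidx_Suc by (subst sum.reindex[OF inj]) (simp add: case_prod_unfold)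
  also have "\<dots> = (\<Sum>m<N. \<Sum>ms\<in>tidx N k. f 0 m * (\<Prod>l<k. f (Suc l) (ms ! l)))"
    by (subst sum.cartesian_product[symmetric])
      (simp del: prod.lessThan_Suc add: prod.lessThan_Suc_shift)
  also have "\<dots> = (\<Sum>m<N. f 0 m) * (\<Prod>l<k. \<Sum>m<N. f (Suc l) m)"
    by (simp add: Suc.IH sum_product)
  also have "\<dots> = (\<Prod>l<Suc k. \<Sum>m<N. f l m)"
    by (simp only: prod.lessThan_Suc_shift)
  finally show ?case by simp
qed

lemma tensor_pow_gram:
  assumes G: "\<forall>i\<in>{..<N}. \<forall>j\<in>{..<N}. \<rho> i j = (\<Sum>m\<in>{..<N}. G i m * cnj (G j m))"
    and xs: "xs \<in> tidx N k" and ys: "ys \<in> tidx N k"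
  shows "tensor_pow \<rho> k xs ys =
    (\<Sum>ms\<in>tidx N k. (\<Prod>l<k. G (xs ! l) (ms ! l)) * cnj (\<Prod>l<k. G (ys ! l) (ms ! l)))"
proof -
  have "tensor_pow \<rho> k xs ys = (\<Prod>l<k. \<Sum>m<N. G (xs ! l) m * cnj (G (ys ! l) m))"
    unfolding tensor_pow_def using G tidx_nth_less[OF xs] tidx_nth_less[OF ys]
    by (intro prod.cong) simp_all
  also have "\<dots> = (\<Sum>ms\<in>tidx N k. \<Prod>l<k. G (xs ! l) (ms ! l) * cnj (G (ys ! l) (ms ! l)))"
    by (rule prod_sum_eq_sum_tidx)
  finally show ?thesis by (simp add: prod.distrib cnj_prod)
qed

text \<open>Factorising \<rho> = G G* writes the trace as a sum of values of the quadratic form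
  of M at product vectors.\<close>
lemma qtrace_nonneg:
  assumes rho: "\<rho> \<in> density_states N" and M: "psd_on (tidx N k) M"
  shows "0 \<le> Re (qtrace N k \<rho> M)"
proof -
  obtain G where G: "\<forall>i\<in>{..<N}. \<forall>j\<in>{..<N}. \<rho> i j = (\<Sum>m\<in>{..<N}. G i m * cnj (G j m))"
    using psd_gram_factorization[of "{..<N}" \<rho>] rho unfolding density_states_def by blast
  define g where "g ms xs = (\<Prod>l<k. G (xs ! l) (ms ! l))" for ms xs
  let ?T = "tidx N k"
  have "qtrace N k \<rho> M = (\<Sum>xs\<in>?T. \<Sum>ys\<in>?T. \<Sum>ms\<in>?T. g ms xs * cnj (g ms ys) * M ys xs)"
    unfolding qtrace_def g_def
    by (intro sum.cong refl) (simp add: tensor_pow_gram[OF G] sum_distrib_right)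
  also have "\<dots> = (\<Sum>xs\<in>?T. \<Sum>ms\<in>?T. \<Sum>ys\<in>?T. g ms xs * cnj (g ms ys) * M ys xs)"
    by (intro sum.cong refl sum.swap)
  also have "\<dots> = (\<Sum>ms\<in>?T. \<Sum>xs\<in>?T. \<Sum>ys\<in>?T. g ms xs * cnj (g ms ys) * M ys xs)"
    by (rule sum.swap)
  also have "\<dots> = (\<Sum>ms\<in>?T. \<Sum>ys\<in>?T. \<Sum>xs\<in>?T. g ms xs * cnj (g ms ys) * M ys xs)"
    by (intro sum.cong refl sum.swap)
  also have "\<dots> = (\<Sum>ms\<in>?T. sesq ?T M (g ms) (g ms))"
    unfolding sesq_def by (simp add: mult_ac)
  finally have "Re (qtrace N k \<rho> M) = (\<Sum>ms\<in>?T. Re (sesq ?T M (g ms) (g ms)))"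
    by simp
  also have "\<dots> \<ge> 0" by (intro sum_nonneg psd_sesq_nonneg[OF M])
  finally show ?thesis by simp
qed

lemma qtrace_sum:
  "(\<Sum>t\<in>S. qtrace N k \<rho> (M t)) = qtrace N k \<rho> (\<lambda>xs ys. \<Sum>t\<in>S. M t xs ys)"
  unfolding qtrace_def by (simp add: sum_distrib_left sum.swap[of _ S])

lemma qtrace_id:
  assumes rho: "\<rho> \<in> density_states N"
    and Ob: "\<forall>xs\<in>tidx N k. \<forall>ys\<in>tidx N k. Ob xs ys = (if xs = ys then 1 else 0)"
  shows "qtrace N k \<rho> Ob = 1"
proof -
  have "qtrace N k \<rho> Ob = (\<Sum>xs\<in>tidx N k. tensor_pow \<rho> k xs xs)"
    unfolding qtrace_def
  proof (intro sum.cong refl)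
    fix xs assume xs: "xs \<in> tidx N k"
    have "(\<Sum>ys\<in>tidx N k. tensor_pow \<rho> k xs ys * Ob ys xs)
        = (\<Sum>ys\<in>tidx N k. if ys = xs then tensor_pow \<rho> k xs ys else 0)"
      using Ob xs by (intro sum.cong refl) auto
    then show "(\<Sum>ys\<in>tidx N k. tensor_pow \<rho> k xs ys * Ob ys xs) = tensor_pow \<rho> k xs xs"
      using xs finite_tidx by simp
  qed
  also have "\<dots> = (\<Prod>l<k. \<Sum>m<N. \<rho> m m)"
    unfolding tensor_pow_def by (rule prod_sum_eq_sum_tidx[symmetric])
  also have "\<dots> = 1" using rho unfolding density_states_def by simp
  finally show ?thesis .
qed

definition povm_on :: "'i set \<Rightarrow> 't set \<Rightarrow> ('t \<Rightarrow> 'i \<Rightarrow> 'i \<Rightarrow> complex) \<Rightarrow> bool" where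
  "povm_on I S M \<longleftrightarrow> finite S \<and> (\<forall>t\<in>S. psd_on I (M t)) \<and>
     (\<forall>x\<in>I. \<forall>y\<in>I. (\<Sum>t\<in>S. M t x y) = (if x = y then 1 else 0))"

lemma quantum_learns_iff_povm:
  "quantum_learns N k \<delta> Q Z \<longleftrightarrow> (\<exists>S M. povm_on (tidx N k) S M \<and>
     (\<forall>\<rho>\<in>Q. 1 - \<delta> \<le> (\<Sum>t\<in>S \<inter> Z \<rho>. Re (qtrace N k \<rho> (M t)))))"
  unfolding quantum_learns_def povm_on_def by blast

lemma povm_partial_sum_psd:
  assumes "povm_on I S M" "A \<subseteq> S"
  shows "psd_on I (\<lambda>x y. \<Sum>t\<in>A. M t x y)"
  using assms unfolding povm_on_def by (intro psd_sum) blast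

lemma povm_partial_sum_opnorm_le1:
  assumes fin: "finite I" and M: "povm_on I S M" and A: "A \<subseteq> S"
  shows "opnorm_le1_on I (\<lambda>x y. \<Sum>t\<in>A. M t x y)"
proof (rule opnorm_le1_if_psd_below_id[OF fin povm_partial_sum_psd[OF M A]])
  have "finite S" using M unfolding povm_on_def by blast
  then have "(\<Sum>t\<in>S - A. M t x y) = (if x = y then 1 else 0) - (\<Sum>t\<in>A. M t x y)"
    if "x \<in> I" "y \<in> I" for x y
    using M that sum.subset_diff[OF A, of "\<lambda>t. M t x y"] unfolding povm_on_def by simp
  then show "psd_on I (\<lambda>x y. (if x = y then 1 else 0) - (\<Sum>t\<in>A. M t x y))"
    by (rule psd_on_cong[THEN iffD1, OF _ povm_partial_sum_psd[OF M Diff_subset]])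
qed

lemma qstat_obs_povm_partial_sum:
  assumes "povm_on (tidx N k) S M" "A \<subseteq> S"
  shows "qstat_obs N k (\<lambda>xs ys. \<Sum>t\<in>A. M t xs ys)"
  unfolding qstat_obs_def
  using povm_partial_sum_opnorm_le1[OF finite_tidx assms] povm_partial_sum_psd[OF assms]
  by (simp add: psd_hermitian)

lemma povm_prob_sum:
  assumes "povm_on (tidx N k) S M" "\<rho> \<in> density_states N"
  shows "(\<Sum>t\<in>S. Re (qtrace N k \<rho> (M t))) = 1"
proof -
  have "(\<Sum>t\<in>S. qtrace N k \<rho> (M t)) = 1"
    using assms unfolding qtrace_sum povm_on_def by (intro qtrace_id) auto
  then show ?thesis by (metis Re_sum one_complex.sel)
qed

lemma povm_partial_sum_bounds:
  assumes M: "povm_on (tidx N k) S M" and rho: "\<rho> \<in> density_states N" and A: "A \<subseteq> S"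
    and success: "1 - \<delta> \<le> (\<Sum>t\<in>S \<inter> T. Re (qtrace N k \<rho> (M t)))"
  shows "S \<inter> T \<subseteq> A \<Longrightarrow> 1 - \<delta> \<le> Re (qtrace N k \<rho> (\<lambda>xs ys. \<Sum>t\<in>A. M t xs ys))"
    and "A \<inter> T = {} \<Longrightarrow> Re (qtrace N k \<rho> (\<lambda>xs ys. \<Sum>t\<in>A. M t xs ys)) \<le> \<delta>"
proof -
  let ?p = "\<lambda>t. Re (qtrace N k \<rho> (M t))"
  have fin: "finite S" using M unfolding povm_on_def by blast
  have p_nonneg: "0 \<le> ?p t" if "t \<in> S" for t
    using M that rho qtrace_nonneg unfolding povm_on_def by blast
  have p_A: "Re (qtrace N k \<rho> (\<lambda>xs ys. \<Sum>t\<in>A. M t xs ys)) = (\<Sum>t\<in>A. ?p t)"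
    by (simp flip: qtrace_sum)
  show "1 - \<delta> \<le> Re (qtrace N k \<rho> (\<lambda>xs ys. \<Sum>t\<in>A. M t xs ys))" if "S \<inter> T \<subseteq> A"
    unfolding p_A using success sum_mono2[OF finite_subset[OF A fin] that, of ?p] A p_nonneg
    by force
  show "Re (qtrace N k \<rho> (\<lambda>xs ys. \<Sum>t\<in>A. M t xs ys)) \<le> \<delta>" if "A \<inter> T = {}"
  proof -
    have "(\<Sum>t\<in>A. ?p t) \<le> (\<Sum>t\<in>S - T. ?p t)"
      using that A p_nonneg by (intro sum_mono2) (auto simp: fin)
    also have "\<dots> = 1 - (\<Sum>t\<in>S \<inter> T. ?p t)"
      using povm_prob_sum[OF M rho] sum.Int_Diff[OF fin, of ?p T] by linarith
    finally show ?thesis unfolding p_A using success by simp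
  qed
qed

text \<open>The answer to the query Os j is read as bit j of an index (set iff the answer exceeds
  1/2); acc holds the bits below j decoded so far.\<close>
primrec bitwise_search :: "nat \<Rightarrow> (nat \<Rightarrow> kop) \<Rightarrow> (nat \<Rightarrow> 't) \<Rightarrow> nat \<Rightarrow> nat \<Rightarrow> 't sq_alg" where
  "bitwise_search 0 Os out j acc = Output (out acc)"
| "bitwise_search (Suc r) Os out j acc =
     Ask (Os j) (\<lambda>v. bitwise_search r Os out (Suc j) (if v > 1/2 then acc + 2 ^ j else acc))"

lemma sq_ok_bitwise_search:
  assumes obs: "\<And>j. j < q \<Longrightarrow> qstat_obs N k (Os j)"
    and bit: "\<And>j v. j < q \<Longrightarrow> cmod (complex_of_real v - qtrace N k \<rho> (Os j)) \<le> \<tau> \<Longrightarrow>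
                 v > 1/2 \<longleftrightarrow> odd (i div 2 ^ j)"
    and out: "out i \<in> T" and i: "i < 2 ^ q"
  shows "sq_ok N k \<tau> \<rho> T (bitwise_search q Os out 0 0) q"
proof -
  have "sq_ok N k \<tau> \<rho> T (bitwise_search r Os out j (i mod 2 ^ j)) r" if "j + r = q" for j r
    using that
  proof (induction r arbitrary: j)
    case 0
    then show ?case using out i by simp
  next
    case (Suc r)
    have "(if v > 1/2 then i mod 2 ^ j + 2 ^ j else i mod 2 ^ j) = i mod 2 ^ Suc j"
      if "cmod (complex_of_real v - qtrace N k \<rho> (Os j)) \<le> \<tau>" for v
      using bit[OF _ that] Suc.prems mod_mult2_eq[of i "2 ^ j" 2]
      by (auto simp: odd_iff_mod_2_eq_one even_iff_mod_2_eq_zero mult.commute)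
    then show ?case
      using obs Suc.prems Suc.IH[of "Suc j"] by auto
  qed
  from this[of 0 q] show ?thesis by simp
qed

lemma finite_disjoint_family_meeting_finite_set:
  assumes "finite S" and "\<forall>A\<in>F. \<forall>B\<in>F. A \<noteq> B \<longrightarrow> A \<inter> B = {}" and "\<forall>A\<in>F. S \<inter> A \<noteq> {}"
  shows "finite F"
proof (rule finite_imageD)
  show "inj_on (\<lambda>A. S \<inter> A) F"
  proof (rule inj_onI)
    fix A B assume "A \<in> F" "B \<in> F" "S \<inter> A = S \<inter> B"
    then have "A \<inter> B \<noteq> {}" using assms(3) by blast
    with \<open>A \<in> F\<close> \<open>B \<in> F\<close> show "A = B" using assms(2) by blast
  qed
  show "finite ((\<lambda>A. S \<inter> A) ` F)"
    using assms(1) by (rule finite_subset[rotated, OF finite_Pow_iff[THEN iffD2]]) blast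
qed

lemma ex_mem_disjoint_family_iff:
  assumes "\<forall>A\<in>F. \<forall>B\<in>F. A \<noteq> B \<longrightarrow> A \<inter> B = {}" "A \<in> F" "t \<in> A"
  shows "(\<exists>B\<in>F. t \<in> B \<and> P B) \<longleftrightarrow> P A"
proof
  assume "\<exists>B\<in>F. t \<in> B \<and> P B"
  then obtain B where "B \<in> F" "t \<in> B" "P B" by blast
  moreover from this have "B = A" using assms by blast
  ultimately show "P A" by simp
qed (use assms in blast)

lemma less_pow2_ceiling_log: "i < n \<Longrightarrow> i < 2 ^ nat \<lceil>log 2 (real n)\<rceil>"
proof -
  assume "i < n"
  have "real n \<le> 2 ^ nat \<lceil>log 2 (real n)\<rceil>"
    by (rule power_of_nat_log_ge) simp
  then have "n \<le> 2 ^ nat \<lceil>log 2 (real n)\<rceil>"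
    by (simp only: of_nat_le_numeral_power_cancel_iff)
  with \<open>i < n\<close> show ?thesis by simp
qed

lemma threshold_answer_decides:
  assumes "cmod (complex_of_real v - c) \<le> \<tau>" "\<tau> < 1/2 - \<delta>"
    and "b \<Longrightarrow> 1 - \<delta> \<le> Re c" "\<not> b \<Longrightarrow> Re c \<le> \<delta>"
  shows "v > 1/2 \<longleftrightarrow> b"
proof -
  have "\<bar>v - Re c\<bar> \<le> \<tau>"
    using abs_Re_le_cmod[of "complex_of_real v - c"] assms(1) by simp
  then show ?thesis using assms(2-4) by (cases b) linarith+
qed

lemma sq_learns_by_bit_queries:
  fixes Os :: "nat \<Rightarrow> kop" and ind :: "cmat \<Rightarrow> nat" and out :: "nat \<Rightarrow> 't" and Z :: "cmat \<Rightarrow> 't set"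
  assumes obs: "\<And>j. j < q \<Longrightarrow> qstat_obs N k (Os j)" and \<tau>: "\<tau> < 1/2 - \<delta>"
    and index: "\<And>\<rho>. \<rho> \<in> Q \<Longrightarrow> ind \<rho> < 2 ^ q \<and> out (ind \<rho>) \<in> Z \<rho>"
    and bit_set: "\<And>\<rho> j. \<rho> \<in> Q \<Longrightarrow> odd (ind \<rho> div 2 ^ j) \<Longrightarrow> 1 - \<delta> \<le> Re (qtrace N k \<rho> (Os j))"
    and bit_unset: "\<And>\<rho> j. \<rho> \<in> Q \<Longrightarrow> even (ind \<rho> div 2 ^ j) \<Longrightarrow> Re (qtrace N k \<rho> (Os j)) \<le> \<delta>"
  shows "sq_learns N k \<tau> Q Z q"
proof -
  have "sq_ok N k \<tau> \<rho> (Z \<rho>) (bitwise_search q Os out 0 0) q" if \<rho>: "\<rho> \<in> Q" for \<rho>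
  proof (rule sq_ok_bitwise_search[where i = "ind \<rho>"])
    show "v > 1/2 \<longleftrightarrow> odd (ind \<rho> div 2 ^ j)"
      if "cmod (complex_of_real v - qtrace N k \<rho> (Os j)) \<le> \<tau>" for j v
      using that \<tau> bit_set[OF \<rho>] bit_unset[OF \<rho>] by (rule threshold_answer_decides) auto
  qed (simp_all add: obs index[OF \<rho>])
  then show ?thesis unfolding sq_learns_def by blast
qed

lemma quantum_learns_imp_sq_learns:
  fixes Q :: "cmat set" and Z :: "cmat \<Rightarrow> 't set"
  assumes Q: "Q \<subseteq> density_states N" and \<delta>: "\<delta> < 1/2" and \<tau>: "\<tau> < 1/2 - \<delta>"
    and disj: "\<forall>A\<in>Z ` Q. \<forall>B\<in>Z ` Q. A \<noteq> B \<longrightarrow> A \<inter> B = {}"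
    and learns: "quantum_learns N k \<delta> Q Z"
  shows "sq_learns N k \<tau> Q Z (nat \<lceil>log 2 (real (card (Z ` Q)))\<rceil>)"
proof -
  obtain S M where M: "povm_on (tidx N k) S M"
    and success: "\<And>\<rho>. \<rho> \<in> Q \<Longrightarrow> 1 - \<delta> \<le> (\<Sum>t\<in>S \<inter> Z \<rho>. Re (qtrace N k \<rho> (M t)))"
    using learns unfolding quantum_learns_iff_povm by blast
  have meets: "S \<inter> Z \<rho> \<noteq> {}" if "\<rho> \<in> Q" for \<rho>
    using success[OF that] \<delta> by force
  have "finite (Z ` Q)"
    using M meets disj unfolding povm_on_def
    by (intro finite_disjoint_family_meeting_finite_set[of S]) auto
  then obtain idx where idx: "bij_betw idx (Z ` Q) {0..<card (Z ` Q)}"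
    using ex_bij_betw_finite_nat by blast
  define Sj where "Sj j = {t \<in> S. \<exists>B\<in>Z ` Q. t \<in> B \<and> odd (idx B div 2 ^ j)}" for j
  have Sj_sub: "Sj j \<subseteq> S" for j
    unfolding Sj_def by blast
  have Sj_iff: "t \<in> Sj j \<longleftrightarrow> odd (idx (Z \<rho>) div 2 ^ j)" if "\<rho> \<in> Q" "t \<in> S \<inter> Z \<rho>" for \<rho> t j
    unfolding Sj_def using ex_mem_disjoint_family_iff[OF disj, of "Z \<rho>" t] that by simp
  show ?thesis
  proof (rule sq_learns_by_bit_queries[where ind = "\<lambda>\<rho>. idx (Z \<rho>)"
        and Os = "\<lambda>j xs ys. \<Sum>t\<in>Sj j. M t xs ys" and out = "\<lambda>i. SOME t. t \<in> inv_into (Z ` Q) idx i"])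
    show "qstat_obs N k (\<lambda>xs ys. \<Sum>t\<in>Sj j. M t xs ys)" for j
      using M Sj_sub by (rule qstat_obs_povm_partial_sum)
    show "\<tau> < 1/2 - \<delta>" by (fact \<tau>)
    fix \<rho> j assume \<rho>: "\<rho> \<in> Q"
    then have "idx (Z \<rho>) < 2 ^ nat \<lceil>log 2 (real (card (Z ` Q)))\<rceil>"
      using bij_betw_apply[OF idx] by (auto intro: less_pow2_ceiling_log)
    moreover have "(SOME t. t \<in> inv_into (Z ` Q) idx (idx (Z \<rho>))) \<in> Z \<rho>"
      using meets[OF \<rho>] \<rho> bij_betw_imp_inj_on[OF idx] by (auto intro: someI)
    ultimately show "idx (Z \<rho>) < 2 ^ nat \<lceil>log 2 (real (card (Z ` Q)))\<rceil> \<and>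
        (SOME t. t \<in> inv_into (Z ` Q) idx (idx (Z \<rho>))) \<in> Z \<rho>" ..
    have "\<rho> \<in> density_states N"
      using Q \<rho> by blast
    note bounds = povm_partial_sum_bounds[OF M this Sj_sub success[OF \<rho>]]
    show "1 - \<delta> \<le> Re (qtrace N k \<rho> (\<lambda>xs ys. \<Sum>t\<in>Sj j. M t xs ys))" if "odd (idx (Z \<rho>) div 2 ^ j)"
      using Sj_iff[OF \<rho>] that by (intro bounds(1)) blast
    show "Re (qtrace N k \<rho> (\<lambda>xs ys. \<Sum>t\<in>Sj j. M t xs ys)) \<le> \<delta>" if "even (idx (Z \<rho>) div 2 ^ j)"
      using Sj_iff[OF \<rho>] that Sj_sub by (intro bounds(2)) blast
  qed
qed

theorem mainTheorem10:
  fixes N k :: nat and \<delta> :: real and Q :: "cmat set" and Z :: "cmat \<Rightarrow> 't set"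
  assumes "0 \<le> \<delta>" and "\<delta> < 1/2"
    and "Q \<subseteq> density_states N"
    and "\<forall>A\<in>Z ` Q. \<forall>B\<in>Z ` Q. A \<noteq> B \<longrightarrow> A \<inter> B = {}"
  shows "(quantum_learns N k \<delta> Q Z \<longrightarrow>
            (\<forall>\<tau>. \<tau> < 1/2 - \<delta> \<longrightarrow>
               sq_learns N k \<tau> Q Z (nat \<lceil>log 2 (real (card (Z ` Q)))\<rceil>)))
       \<and> (\<delta> \<le> 1/3 \<and> \<not> sq_learns N k (1/10) Q Z (nat \<lceil>log 2 (real (card (Z ` Q)))\<rceil>)
            \<longrightarrow> \<not> quantum_learns N k \<delta> Q Z)"
  using quantum_learns_imp_sq_learns[OF assms(3,2) _ assms(4)] by force

end
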